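(* Let $P=\{x\in\mathbb{R}^n: Ax\le b,\ 0\le x_i\le u_i \text{ for } i\in I\}$ be a rational polyhedron with $I=\{1,\dots,l\}$ and positive integers $u_i$, and let $\mathcal{B}=(B^1,\dots,B^l)$ be a binarization scheme, $B^i\in\Gamma^{q_i}_{u_i}$, with $z_1\in\mathbb{R}^{q_1}$ the new variables associated with $x_1$. Then for any split set $S=\{(x,z)\in\mathbb{R}^{n+q}:\pi_0<\pi^Tz_1<\pi_0+1\}$ with $\pi\in\mathbb{Z}^{q_1}$ and $\pi_0\in\mathbb{Z}$, there exists a split set $S'=\{x\in\mathbb{R}^n:\sigma_0<\sigma^Tx<\sigma_0+1\}$ with $\sigma\in\mathbb{Z}^n$, $\sigma_j=0$ for $j\notin I$, and $\sigma_0\in\mathbb{Z}$, such that \[\operatorname{proj}_x(P_{\mathcal{B}}\setminus S)\supseteq P\setminus S'.\]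
   Context: For positive integers $q,u$, $\Gamma^q_u$ is the set of rational polytopes $B\subseteq\{(x,z)\in\mathbb{R}\times[0,1]^q:0\le x\le u\}$ with $\operatorname{proj}_x(B\cap(\mathbb{R}\times\{0,1\}^q))=\{0,1,\dots,u\}$. For a binarization scheme $\mathcal{B}=(B^1,\dots,B^l)$, $q=\sum_iq_i$ and $P_{\mathcal{B}}=\{(x,z)\in\mathbb{R}^n\times\mathbb{R}^q: x\in P,\ (x_i,z_i)\in B^i \text{ for } i\in I\}$, where $z=(z_1,\dots,z_l)$ with $z_i\in\mathbb{R}^{q_i}$. $\operatorname{proj}_x$ is orthogonal projection onto the $x$-coordinates. *)

theory Defs
  imports Complex_Main
begin

text \<open>Vectors of R^d are encoded as functions nat => real vanishing from index d on
  (coordinates are indexed 0,...,d-1).\<close>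
definition Rn :: "nat \<Rightarrow> (nat \<Rightarrow> real) set" where
  "Rn d = {x. \<forall>j\<ge>d. x j = 0}"

definition rat_polytope_xz :: "nat \<Rightarrow> (real \<times> (nat \<Rightarrow> real)) set \<Rightarrow> bool" where
  "rat_polytope_xz q B \<longleftrightarrow>
     (\<exists>(m::nat) (a::nat \<Rightarrow> real) (c::nat \<Rightarrow> nat \<Rightarrow> real) (d::nat \<Rightarrow> real).
        (\<forall>k<m. a k \<in> \<rat> \<and> d k \<in> \<rat> \<and> (\<forall>j<q. c k j \<in> \<rat>)) \<and>
        B = {(x, z). z \<in> Rn q \<and> (\<forall>k<m. a k * x + (\<Sum>j<q. c k j * z j) \<le> d k)}) \<and>
     (\<exists>M. \<forall>(x, z)\<in>B. \<bar>x\<bar> \<le> M \<and> (\<forall>j<q. \<bar>z j\<bar> \<le> M))"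

definition Gamma :: "nat \<Rightarrow> nat \<Rightarrow> (real \<times> (nat \<Rightarrow> real)) set set" where
  "Gamma q u = {B. rat_polytope_xz q B \<and>
     B \<subseteq> {(x, z). z \<in> Rn q \<and> (\<forall>j<q. 0 \<le> z j \<and> z j \<le> 1) \<and> 0 \<le> x \<and> x \<le> real u} \<and>
     fst ` (B \<inter> {(x, z). z \<in> Rn q \<and> (\<forall>j<q. z j = 0 \<or> z j = 1)}) = real ` {0..u}}"

definition box_polyhedron ::
  "nat \<Rightarrow> nat \<Rightarrow> (nat \<Rightarrow> nat \<Rightarrow> real) \<Rightarrow> (nat \<Rightarrow> real) \<Rightarrow> nat \<Rightarrow> (nat \<Rightarrow> nat) \<Rightarrow> (nat \<Rightarrow> real) set" where
  "box_polyhedron n m A b l u = {x \<in> Rn n. (\<forall>k<m. (\<Sum>j<n. A k j * x j) \<le> b k) \<and>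
      (\<forall>i<l. 0 \<le> x i \<and> x i \<le> real (u i))}"

text \<open>The extended formulation P_B. The new variables z = (z_1,...,z_l) are encoded
  as z :: nat => nat => real, z i being the block z_{i+1} in R^{q_{i+1}}.\<close>
definition binarized ::
  "nat \<Rightarrow> (nat \<Rightarrow> real) set \<Rightarrow> nat \<Rightarrow> (nat \<Rightarrow> (real \<times> (nat \<Rightarrow> real)) set)
     \<Rightarrow> ((nat \<Rightarrow> real) \<times> (nat \<Rightarrow> nat \<Rightarrow> real)) set" where
  "binarized n P l B = {(x, z). x \<in> P \<and> (\<forall>i<l. (x i, z i) \<in> B i) \<and> (\<forall>i\<ge>l. z i = (\<lambda>_. 0))}"

end

theory Submission
  imports Defs
begin

text \<open>Fix for every integer k in [0, u_1] a binary point (k, z^k) of B^1. Since \<pi> is integral,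
  \<pi>^T z^k is an integer and lies on one side of the split. If x_1 lies between two integers
  whose points are on the same side, the convex combination of these points, which is in B^1
  by convexity, lifts x_1 outside S. This fails only for x_1 strictly between j and j + 1 where
  the side changes at j and nowhere else, so S' = {j < x_1 < j + 1} works. The remaining blocks
  are lifted arbitrarily, as each B^i projects onto [0, u_i].\<close>

lemma sum_convex_comb:
  fixes c z1 z2 :: "nat \<Rightarrow> real"
  shows "(\<Sum>j\<in>J. c j * (th * z1 j + (1 - th) * z2 j)) =
    th * (\<Sum>j\<in>J. c j * z1 j) + (1 - th) * (\<Sum>j\<in>J. c j * z2 j)"
  by (simp add: distrib_left sum.distrib sum_distrib_left mult.left_commute)

lemma rat_polytope_xz_convex_comb:
  assumes "rat_polytope_xz q B" "(a, z1) \<in> B" "(b, z2) \<in> B" "0 \<le> th" "th \<le> 1"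
  shows "(th * a + (1 - th) * b, \<lambda>j. th * z1 j + (1 - th) * z2 j) \<in> B"
proof -
  obtain m :: nat and a' c d
    where B: "B = {(x, z). z \<in> Rn q \<and> (\<forall>k<m. a' k * x + (\<Sum>j<q. c k j * z j) \<le> d k)}"
    using assms(1) unfolding rat_polytope_xz_def by auto
  have "a' k * (th * a + (1 - th) * b) + (\<Sum>j<q. c k j * (th * z1 j + (1 - th) * z2 j))
      = th * (a' k * a + (\<Sum>j<q. c k j * z1 j)) + (1 - th) * (a' k * b + (\<Sum>j<q. c k j * z2 j))"
    for k
    by (simp only: sum_convex_comb) (simp add: algebra_simps)
  with assms(2-5) show ?thesis
    unfolding B Rn_def by (auto intro!: convex_bound_le)
qed

lemma rat_polytope_xz_segment:
  assumes "rat_polytope_xz q B" "(a, z1) \<in> B" "(b, z2) \<in> B" "a \<le> t" "t \<le> b"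
  obtains th where "0 \<le> th" "th \<le> 1" "(t, \<lambda>j. th * z1 j + (1 - th) * z2 j) \<in> B"
proof (cases "a = b")
  case True
  then show ?thesis using assms that[of 1] by simp
next
  case False
  define th where "th = (b - t) / (b - a)"
  have "a < b" using False assms by simp
  then have "0 \<le> th" "th \<le> 1" "th * (b - a) = b - t"
    using assms(4,5) by (auto simp: th_def field_simps)
  moreover have "th * a + (1 - th) * b = b - th * (b - a)" by (simp add: algebra_simps)
  ultimately show ?thesis
    using rat_polytope_xz_convex_comb[OF assms(1-3), of th] that by simp
qed

lemma Gamma_binary_point:
  assumes "B \<in> Gamma q u" "k \<le> u"
  obtains z where "(real k, z) \<in> B" "\<forall>j<q. z j = 0 \<or> z j = 1"
proof -
  have "real k \<in> fst ` (B \<inter> {(x, z). z \<in> Rn q \<and> (\<forall>j<q. z j = 0 \<or> z j = 1)})"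
    using assms unfolding Gamma_def by auto
  then show ?thesis using that by force
qed

lemma Gamma_fiber_nonempty:
  assumes "B \<in> Gamma q u" "0 \<le> t" "t \<le> real u"
  shows "\<exists>z. (t, z) \<in> B"
proof -
  obtain z0 where z0: "(real 0, z0) \<in> B" using Gamma_binary_point[OF assms(1), of 0] by blast
  obtain z1 where z1: "(real u, z1) \<in> B" using Gamma_binary_point[OF assms(1), of u] by blast
  have "rat_polytope_xz q B" using assms(1) unfolding Gamma_def by simp
  from rat_polytope_xz_segment[OF this z0 z1] assms(2,3) show ?thesis by auto
qed

lemma single_label_change:
  fixes f :: "nat \<Rightarrow> bool" and u :: nat
  obtains s :: int where "\<And>t. 0 \<le> t \<Longrightarrow> t \<le> real u \<Longrightarrow>
    \<not> (real_of_int s < t \<and> t < real_of_int s + 1) \<Longrightarrow>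
    \<exists>k1 k2. k2 \<le> u \<and> real k1 \<le> t \<and> t \<le> real k2 \<and> f k1 = f k2"
proof -
  define threshold where "threshold j \<longleftrightarrow>
    j < u \<and> (\<forall>k\<le>j. f k = f 0) \<and> (\<forall>k. j < k \<and> k \<le> u \<longrightarrow> f k \<noteq> f 0)" for j
  have no_threshold_below: "\<not> threshold j" if "threshold j'" "j < j'" for j j'
  proof
    assume "threshold j"
    then have above_j: "\<forall>k. j < k \<and> k \<le> u \<longrightarrow> f k \<noteq> f 0"
      unfolding threshold_def by blast
    have "j' < u" and below_j': "\<forall>k\<le>j'. f k = f 0"
      using \<open>threshold j'\<close> unfolding threshold_def by blast+
    moreover have "Suc j \<le> j'" using \<open>j < j'\<close> by simp
    ultimately have "Suc j \<le> u" "f (Suc j) = f 0" by (blast intro: le_trans less_imp_le)+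
    with above_j show False by blast
  qed
  have threshold_unique: "j = j'" if "threshold j" "threshold j'" for j j'
    using that no_threshold_below[OF that(1)] no_threshold_below[OF that(2)]
    by (cases j j' rule: linorder_cases) blast+
  have pair_or_threshold:
    "(\<exists>k1 k2. k2 \<le> u \<and> real k1 \<le> t \<and> t \<le> real k2 \<and> f k1 = f k2) \<or>
     (\<exists>j. threshold j \<and> real j < t \<and> t < real j + 1)"
    if "0 \<le> t" "t \<le> real u" for t
  proof (cases "\<exists>k1 k2. k2 \<le> u \<and> real k1 \<le> t \<and> t \<le> real k2 \<and> f k1 = f k2")
    case no_pair: False
    define j where "j = nat \<lfloor>t\<rfloor>"
    have j: "real j \<le> t" "t < real j + 1" using that(1) unfolding j_def by linarith+
    have "j \<le> u" using j(1) that(2) by linarith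
    then have "real j \<noteq> t" using no_pair by blast
    with j that(2) have "real j < t" "Suc j \<le> u" by linarith+
    have across: "f k \<noteq> f k'" if "k \<le> j" "j < k'" "k' \<le> u" for k k'
    proof -
      have "real k \<le> t" "t \<le> real k'" using j that by linarith+
      then show ?thesis using no_pair \<open>k' \<le> u\<close> by blast
    qed
    have "f k = f 0" if "k \<le> j" for k
      using across[OF that _ \<open>Suc j \<le> u\<close>] across[of 0 "Suc j"] \<open>Suc j \<le> u\<close> by auto
    moreover have "f k \<noteq> f 0" if "j < k" "k \<le> u" for k
      using across[OF _ that] by simp
    moreover have "j < u" using \<open>Suc j \<le> u\<close> by simp
    ultimately have "threshold j"
      unfolding threshold_def by blast
    then show ?thesis using j \<open>real j < t\<close> by blast
  qed simp
  show ?thesis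
  proof (cases "\<exists>j. threshold j")
    case True
    then obtain j0 where "threshold j0" by blast
    show ?thesis
    proof (rule that[of "int j0"])
      fix t :: real
      assume t: "0 \<le> t" "t \<le> real u"
        "\<not> (real_of_int (int j0) < t \<and> t < real_of_int (int j0) + 1)"
      have "\<not> (threshold j \<and> real j < t \<and> t < real j + 1)" for j
        using threshold_unique[OF \<open>threshold j0\<close>, of j] t(3) by auto
      then show "\<exists>k1 k2. k2 \<le> u \<and> real k1 \<le> t \<and> t \<le> real k2 \<and> f k1 = f k2"
        using pair_or_threshold[OF t(1,2)] by blast
    qed
  next
    case False
    show ?thesis
    proof (rule that[of "-1"])
      fix t :: real assume "0 \<le> t" "t \<le> real u"
      then show "\<exists>k1 k2. k2 \<le> u \<and> real k1 \<le> t \<and> t \<le> real k2 \<and> f k1 = f k2"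
        using pair_or_threshold False by blast
    qed
  qed
qed

lemma Gamma_split_single_variable:
  fixes \<pi> :: "nat \<Rightarrow> int" and \<pi>0 :: int
  assumes "B \<in> Gamma q u"
  obtains s :: int where "\<And>t. 0 \<le> t \<Longrightarrow> t \<le> real u \<Longrightarrow>
    \<not> (real_of_int s < t \<and> t < real_of_int s + 1) \<Longrightarrow>
    \<exists>z. (t, z) \<in> B \<and> \<not> (real_of_int \<pi>0 < (\<Sum>j<q. real_of_int (\<pi> j) * z j) \<and>
                            (\<Sum>j<q. real_of_int (\<pi> j) * z j) < real_of_int \<pi>0 + 1)"
proof -
  have "\<forall>k\<in>{..u}. \<exists>z. (real k, z) \<in> B \<and> (\<forall>j<q. z j = 0 \<or> z j = 1)"
    using Gamma_binary_point[OF assms] by (metis atMost_iff)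
  then obtain v where v: "\<And>k. k \<le> u \<Longrightarrow> (real k, v k) \<in> B"
    and v_binary: "\<And>k j. k \<le> u \<Longrightarrow> j < q \<Longrightarrow> v k j = 0 \<or> v k j = 1"
    by (metis atMost_iff bchoice)
  define val where "val k = (\<Sum>j<q. real_of_int (\<pi> j) * v k j)" for k
  have val_split: "val k \<le> real_of_int \<pi>0 \<or> real_of_int \<pi>0 + 1 \<le> val k" if "k \<le> u" for k
  proof -
    have "val k \<in> \<int>"
      unfolding val_def using v_binary[OF that] by (intro Ints_sum) fastforce
    then obtain i where "val k = of_int i" by (elim Ints_cases)
    moreover have "i \<le> \<pi>0 \<or> \<pi>0 + 1 \<le> i" by linarith
    ultimately show ?thesis by (metis of_int_1 of_int_add of_int_le_iff)
  qed
  have B_polytope: "rat_polytope_xz q B" using assms unfolding Gamma_def by simp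
  obtain s :: int where s: "\<And>t. 0 \<le> t \<Longrightarrow> t \<le> real u \<Longrightarrow>
      \<not> (real_of_int s < t \<and> t < real_of_int s + 1) \<Longrightarrow>
      \<exists>k1 k2. k2 \<le> u \<and> real k1 \<le> t \<and> t \<le> real k2 \<and>
        (val k1 \<le> real_of_int \<pi>0) = (val k2 \<le> real_of_int \<pi>0)"
    using single_label_change[where f = "\<lambda>k. val k \<le> real_of_int \<pi>0" and u = u] by blast
  show ?thesis
  proof (rule that[of s])
    fix t assume t: "0 \<le> t" "t \<le> real u" "\<not> (real_of_int s < t \<and> t < real_of_int s + 1)"
    then obtain k1 k2 where k: "k2 \<le> u" "real k1 \<le> t" "t \<le> real k2"
      and same_side: "(val k1 \<le> real_of_int \<pi>0) = (val k2 \<le> real_of_int \<pi>0)"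
      using s by blast
    have "k1 \<le> u" using k by linarith
    obtain th where th: "0 \<le> th" "th \<le> 1" "(t, \<lambda>j. th * v k1 j + (1 - th) * v k2 j) \<in> B"
      using rat_polytope_xz_segment[OF B_polytope v[OF \<open>k1 \<le> u\<close>] v[OF \<open>k2 \<le> u\<close>] k(2,3)] .
    have "(\<Sum>j<q. real_of_int (\<pi> j) * (th * v k1 j + (1 - th) * v k2 j)) = th * val k1 + (1 - th) * val k2"
      unfolding val_def by (rule sum_convex_comb)
    moreover have "th * val k1 + (1 - th) * val k2 \<le> real_of_int \<pi>0 \<or>
        real_of_int \<pi>0 + 1 \<le> th * val k1 + (1 - th) * val k2"
      using same_side val_split[OF \<open>k1 \<le> u\<close>] val_split[OF k(1)] th(1,2)
        convex_bound_le[of "val k1" "real_of_int \<pi>0" "val k2" th "1 - th"]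
        convex_bound_le[of "- val k1" "- real_of_int \<pi>0 - 1" "- val k2" th "1 - th"]
      by (auto simp: algebra_simps)
    ultimately show "\<exists>z. (t, z) \<in> B \<and> \<not> (real_of_int \<pi>0 < (\<Sum>j<q. real_of_int (\<pi> j) * z j) \<and>
                            (\<Sum>j<q. real_of_int (\<pi> j) * z j) < real_of_int \<pi>0 + 1)"
      using th(3) by auto
  qed
qed

lemma binarized_lift:
  assumes "x \<in> box_polyhedron n m A b l u" "\<forall>i<l. B i \<in> Gamma (q i) (u i)"
    and "i0 < l" "(x i0, w0) \<in> B i0"
  obtains z where "(x, z) \<in> binarized n (box_polyhedron n m A b l u) l B" "z i0 = w0"
proof -
  have "\<exists>w. (x i, w) \<in> B i" if "i < l" for i
    using assms(1,2) that Gamma_fiber_nonempty unfolding box_polyhedron_def by blast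
  define z where "z i = (if i = i0 then w0 else if i < l then SOME w. (x i, w) \<in> B i else (\<lambda>_. 0))"
    for i
  have "(x i, z i) \<in> B i" if "i < l" for i
    using \<open>\<And>i. i < l \<Longrightarrow> \<exists>w. (x i, w) \<in> B i\<close>[OF that] that assms(4)
      someI_ex[of "\<lambda>w. (x i, w) \<in> B i"] unfolding z_def by auto
  then have "(x, z) \<in> binarized n (box_polyhedron n m A b l u) l B"
    using assms(1,3) unfolding binarized_def z_def by auto
  then show ?thesis using that z_def by simp
qed

lemma sum_first_coordinate:
  fixes x :: "nat \<Rightarrow> real"
  assumes "0 < n"
  shows "(\<Sum>j<n. real_of_int (if j = 0 then 1 else 0) * x j) = x 0"
proof -
  have "(\<Sum>j<n. real_of_int (if j = 0 then 1 else 0) * x j) = (\<Sum>j<n. if j = 0 then x j else 0)"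
    by (rule sum.cong) simp_all
  then show ?thesis using assms by simp
qed

theorem proposition5:
  fixes n m l :: nat
    and A :: "nat \<Rightarrow> nat \<Rightarrow> real" and b :: "nat \<Rightarrow> real"
    and u :: "nat \<Rightarrow> nat" and q :: "nat \<Rightarrow> nat"
    and B :: "nat \<Rightarrow> (real \<times> (nat \<Rightarrow> real)) set"
    and \<pi> :: "nat \<Rightarrow> int" and \<pi>0 :: int
  assumes "1 \<le> l" and "l \<le> n"
    and "\<forall>k<m. b k \<in> \<rat> \<and> (\<forall>j<n. A k j \<in> \<rat>)"
    and "\<forall>i<l. 0 < u i"
    and "\<forall>i<l. 0 < q i \<and> B i \<in> Gamma (q i) (u i)"
  shows "\<exists>(\<sigma>::nat \<Rightarrow> int) (\<sigma>0::int). (\<forall>j. l \<le> j \<and> j < n \<longrightarrow> \<sigma> j = 0) \<and>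
     box_polyhedron n m A b l u - {x \<in> Rn n. real_of_int \<sigma>0 < (\<Sum>j<n. real_of_int (\<sigma> j) * x j)
                                       \<and> (\<Sum>j<n. real_of_int (\<sigma> j) * x j) < real_of_int \<sigma>0 + 1}
     \<subseteq> fst ` (binarized n (box_polyhedron n m A b l u) l B -
         {(x, z). real_of_int \<pi>0 < (\<Sum>j<q 0. real_of_int (\<pi> j) * z 0 j)
                \<and> (\<Sum>j<q 0. real_of_int (\<pi> j) * z 0 j) < real_of_int \<pi>0 + 1})"
proof -
  let ?P = "box_polyhedron n m A b l u"
  let ?S = "{(x, z). real_of_int \<pi>0 < (\<Sum>j<q 0. real_of_int (\<pi> j) * z 0 j)
                \<and> (\<Sum>j<q 0. real_of_int (\<pi> j) * z 0 j) < real_of_int \<pi>0 + 1}"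
  have "0 < l" and B_Gamma: "\<forall>i<l. B i \<in> Gamma (q i) (u i)" using assms(1,5) by auto
  obtain s :: int where s: "\<And>t. 0 \<le> t \<Longrightarrow> t \<le> real (u 0) \<Longrightarrow>
      \<not> (real_of_int s < t \<and> t < real_of_int s + 1) \<Longrightarrow>
      \<exists>z. (t, z) \<in> B 0 \<and> \<not> (real_of_int \<pi>0 < (\<Sum>j<q 0. real_of_int (\<pi> j) * z j) \<and>
                              (\<Sum>j<q 0. real_of_int (\<pi> j) * z j) < real_of_int \<pi>0 + 1)"
    using Gamma_split_single_variable B_Gamma \<open>0 < l\<close> by blast
  have lift: "x \<in> fst ` (binarized n ?P l B - ?S)"
    if x: "x \<in> ?P" and x_outside: "\<not> (real_of_int s < x 0 \<and> x 0 < real_of_int s + 1)" for x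
  proof -
    have "0 \<le> x 0" "x 0 \<le> real (u 0)" using x \<open>0 < l\<close> unfolding box_polyhedron_def by auto
    then obtain w0 where "(x 0, w0) \<in> B 0" and "(x, \<lambda>i. w0) \<notin> ?S"
      using s x_outside by fastforce
    moreover obtain z where "(x, z) \<in> binarized n ?P l B" "z 0 = w0"
      using binarized_lift[OF x B_Gamma \<open>0 < l\<close> \<open>(x 0, w0) \<in> B 0\<close>] .
    ultimately show ?thesis by (intro image_eqI[of _ _ "(x, z)"]) auto
  qed
  show ?thesis
    using lift \<open>0 < l\<close> sum_first_coordinate[of n] assms(2)
    by (intro exI[of _ "\<lambda>j. if j = 0 then 1 else 0"] exI[of _ s]) (auto simp: box_polyhedron_def)
qed

end
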